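(* For $n\ge 2$ let $G_n$ be the intersection graph of the $\binom{n}{2}$ closed intervals $[i,j]$, $1\le i<j\le n$ (two intervals adjacent iff they intersect). If $G_n$ is the union of $t$ comparability subgraphs $H_1,\dots,H_t$ (i.e. $E(G_n)=\bigcup_{i=1}^t E(H_i)$), then $t\ge \frac12\log\log n$, where logarithms are base $2$.
   Context: A comparability graph is a graph admitting a transitive orientation (equivalently, the comparability graph of a partial order). *)

theory Defs
  imports Complex_Main
begin

text \<open>Vertices of G_n: the closed intervals [i,j] with 1 \<le> i < j \<le> n, encoded as pairs (i,j).\<close>
definition intervals :: "nat \<Rightarrow> (nat \<times> nat) set" where
  "intervals n = {(i,j). 1 \<le> i \<and> i < j \<and> j \<le> n}"

definition intervals_meet :: "nat \<times> nat \<Rightarrow> nat \<times> nat \<Rightarrow> bool" where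
  "intervals_meet I J \<longleftrightarrow> max (fst I) (fst J) \<le> min (snd I) (snd J)"

definition Gn_edges :: "nat \<Rightarrow> ((nat \<times> nat) \<times> (nat \<times> nat)) set" where
  "Gn_edges n = {(I,J). I \<in> intervals n \<and> J \<in> intervals n \<and> I \<noteq> J \<and> intervals_meet I J}"

text \<open>A (simple) graph given by a symmetric irreflexive edge relation E is a comparability
  graph iff it admits a transitive orientation: a transitive relation O \<subseteq> E containing
  exactly one of (x,y),(y,x) for every edge.\<close>
definition transitive_orientation :: "('a \<times> 'a) set \<Rightarrow> ('a \<times> 'a) set \<Rightarrow> bool" where
  "transitive_orientation E R \<longleftrightarrow> R \<subseteq> E \<and> trans R \<and>
     (\<forall>x y. (x,y) \<in> E \<longrightarrow> ((x,y) \<in> R \<longleftrightarrow> (y,x) \<notin> R))"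

definition comparability_graph :: "('a \<times> 'a) set \<Rightarrow> bool" where
  "comparability_graph E \<longleftrightarrow> sym E \<and> irrefl E \<and> (\<exists>R. transitive_orientation E R)"

end

theory Submission
  imports Defs
begin

text \<open>Orient every H_k transitively; together with the reversed orientations this gives 2t
  transitive relations covering the edges of G_n. Label an interval [i,j] by the set of
  relations Q for which [i,j] Q [j,k] holds for some k. For i < j < k the intervals [i,j] and
  [j,k] get different labels: a relation Q with [i,j] Q [j,k] cannot satisfy [j,k] Q [k,l],
  since transitivity would join the disjoint intervals [i,j] and [k,l]. Hence the set of labels
  of the intervals starting at i determines i, so n \<le> 2^2^(2t).\<close>

lemma comparability_graphE:
  assumes "comparability_graph E"
  obtains R where "trans R" "R \<subseteq> E" "E \<subseteq> R \<union> R\<inverse>"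
proof -
  from assms obtain R where "trans R" "R \<subseteq> E"
    and oriented: "\<And>x y. (x,y) \<in> E \<Longrightarrow> (x,y) \<in> R \<longleftrightarrow> (y,x) \<notin> R"
    unfolding comparability_graph_def transitive_orientation_def by blast
  moreover have "E \<subseteq> R \<union> R\<inverse>"
    using oriented by auto
  ultimately show thesis
    using that by blast
qed

lemma transitive_cover_if_comparability_cover:
  fixes H :: "nat \<Rightarrow> ('a \<times> 'a) set"
  assumes "sym E"
    and "\<And>k. k < t \<Longrightarrow> comparability_graph (H k) \<and> H k \<subseteq> E"
    and "E \<subseteq> (\<Union>k<t. H k)"
  obtains Q :: "nat \<times> bool \<Rightarrow> ('a \<times> 'a) set"
  where "\<And>q. q \<in> {..<t} \<times> UNIV \<Longrightarrow> trans (Q q)"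
    and "\<And>q. q \<in> {..<t} \<times> UNIV \<Longrightarrow> Q q \<subseteq> E"
    and "E \<subseteq> (\<Union>q\<in>{..<t} \<times> UNIV. Q q)"
proof -
  have "\<exists>R. trans R \<and> R \<subseteq> H k \<and> H k \<subseteq> R \<union> R\<inverse>" if "k < t" for k
    using assms(2)[OF that] by (auto elim: comparability_graphE)
  then obtain R where R: "\<And>k. k < t \<Longrightarrow> trans (R k) \<and> R k \<subseteq> H k \<and> H k \<subseteq> R k \<union> (R k)\<inverse>"
    by metis
  have R_sub: "R k \<subseteq> E" "(R k)\<inverse> \<subseteq> E" if "k < t" for k
    using R[OF that] assms(2)[OF that] \<open>sym E\<close> by (auto simp: sym_conv_converse_eq)
  define Q where "Q = (\<lambda>(k, forward). if forward then R k else (R k)\<inverse>)"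
  show thesis
  proof (rule that)
    fix q
    assume "q \<in> {..<t} \<times> (UNIV :: bool set)"
    then obtain k forward where q: "q = (k, forward)" "k < t"
      by blast
    show "trans (Q q)"
      using R[OF q(2)] by (simp add: Q_def q)
    show "Q q \<subseteq> E"
      using R_sub[OF q(2)] by (simp add: Q_def q)
  next
    show "E \<subseteq> (\<Union>q\<in>{..<t} \<times> UNIV. Q q)"
    proof
      fix e
      assume "e \<in> E"
      then obtain k where k: "k < t" "e \<in> H k"
        using assms(3) by blast
      then have "e \<in> Q (k, True) \<union> Q (k, False)"
        using R[OF k(1)] by (auto simp: Q_def)
      with k(1) show "e \<in> (\<Union>q\<in>{..<t} \<times> UNIV. Q q)"
        by blast
    qed
  qed
qed

lemma inj_on_upper_label_sets:
  fixes S :: "'a::linorder \<Rightarrow> 'a \<Rightarrow> 'b"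
  assumes "\<And>i j k. i \<in> A \<Longrightarrow> j \<in> A \<Longrightarrow> k \<in> A \<Longrightarrow> i < j \<Longrightarrow> j < k \<Longrightarrow> S i j \<noteq> S j k"
  shows "inj_on (\<lambda>i. {S i j | j. j \<in> A \<and> i < j}) A"
proof -
  let ?T = "\<lambda>i. {S i j | j. j \<in> A \<and> i < j}"
  have neq: "?T i \<noteq> ?T j" if "i \<in> A" "j \<in> A" "i < j" for i j
  proof
    assume "?T i = ?T j"
    moreover have "S i j \<in> ?T i"
      using that by blast
    ultimately have "S i j \<in> ?T j"
      by simp
    then obtain k where "k \<in> A" "j < k" "S i j = S j k"
      by blast
    with assms[OF that(1,2) \<open>k \<in> A\<close> that(3)] show False
      by blast
  qed
  show ?thesis
  proof (rule inj_onI)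
    fix i j
    assume "i \<in> A" "j \<in> A" and eq: "?T i = ?T j"
    show "i = j"
    proof (cases i j rule: linorder_cases)
      case equal
      then show ?thesis .
    next
      case less
      from neq[OF \<open>i \<in> A\<close> \<open>j \<in> A\<close> less] eq show ?thesis
        by contradiction
    next
      case greater
      from neq[OF \<open>j \<in> A\<close> \<open>i \<in> A\<close> greater] eq[symmetric] show ?thesis
        by contradiction
    qed
  qed
qed

lemma card_le_exp_if_consecutive_labels_differ:
  fixes S :: "'a::linorder \<Rightarrow> 'a \<Rightarrow> 'b"
  assumes "finite B"
    and "\<And>i j. i \<in> A \<Longrightarrow> j \<in> A \<Longrightarrow> i < j \<Longrightarrow> S i j \<in> B"
    and "\<And>i j k. i \<in> A \<Longrightarrow> j \<in> A \<Longrightarrow> k \<in> A \<Longrightarrow> i < j \<Longrightarrow> j < k \<Longrightarrow> S i j \<noteq> S j k"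
  shows "card A \<le> 2 ^ card B"
proof -
  let ?T = "\<lambda>i. {S i j | j. j \<in> A \<and> i < j}"
  have "card A = card (?T ` A)"
    using card_image[OF inj_on_upper_label_sets[of A S, OF assms(3)]] by simp
  also have "\<dots> \<le> card (Pow B)"
    using assms(1,2) by (intro card_mono) auto
  finally show ?thesis
    by (simp add: card_Pow assms(1))
qed

lemma consecutive_intervals_adjacent:
  assumes "1 \<le> i" "i < j" "j < k" "k \<le> n"
  shows "((i,j),(j,k)) \<in> Gn_edges n"
  using assms unfolding Gn_edges_def intervals_def intervals_meet_def by auto

lemma separated_intervals_not_adjacent:
  assumes "j < k"
  shows "((i,j),(k,l)) \<notin> Gn_edges n"
  using assms unfolding Gn_edges_def intervals_meet_def by auto

lemma sym_Gn_edges: "sym (Gn_edges n)"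
  unfolding sym_def Gn_edges_def intervals_meet_def by (auto simp: max.commute min.commute)

lemma card_le_exp_exp_if_transitive_cover:
  fixes Q :: "'i \<Rightarrow> ((nat \<times> nat) \<times> (nat \<times> nat)) set"
  assumes "finite I"
    and trans: "\<And>q. q \<in> I \<Longrightarrow> trans (Q q)"
    and sub: "\<And>q. q \<in> I \<Longrightarrow> Q q \<subseteq> Gn_edges n"
    and cover: "Gn_edges n \<subseteq> (\<Union>q\<in>I. Q q)"
  shows "n \<le> 2 ^ 2 ^ card I"
proof -
  define S where "S i j = {q \<in> I. \<exists>k. j < k \<and> k \<le> n \<and> ((i,j),(j,k)) \<in> Q q}" for i j
  have "S i j \<noteq> S j k" if "i \<in> {1..n}" "k \<in> {1..n}" "i < j" "j < k" for i j k
  proof -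
    have "((i,j),(j,k)) \<in> Gn_edges n"
      using that by (intro consecutive_intervals_adjacent) auto
    then obtain q where q: "q \<in> I" "((i,j),(j,k)) \<in> Q q"
      using cover by blast
    have "q \<notin> S j k"
    proof
      assume "q \<in> S j k"
      then obtain l where "((j,k),(k,l)) \<in> Q q"
        unfolding S_def by blast
      with q trans have "((i,j),(k,l)) \<in> Q q"
        by (meson transD)
      with sub[OF q(1)] separated_intervals_not_adjacent[OF \<open>j < k\<close>] show False
        by blast
    qed
    moreover have "q \<in> S i j"
      unfolding S_def using q that by auto
    ultimately show ?thesis
      by blast
  qed
  then have "card {1..n} \<le> 2 ^ card (Pow I)"
    using assms(1) by (intro card_le_exp_if_consecutive_labels_differ[where S = S]) (auto simp: S_def)
  then show ?thesis
    by (simp add: card_Pow assms(1))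
qed

lemma log_log_le_if_le_exp_exp:
  fixes x :: real
  assumes "1 < x" "x \<le> 2 ^ 2 ^ s"
  shows "log 2 (log 2 x) \<le> s"
proof -
  have "log 2 x \<le> 2 ^ s"
    using assms log_le_cancel_iff[of 2 x "2 ^ 2 ^ s"] by (simp add: log_nat_power)
  moreover have "0 < log 2 x"
    using assms(1) by simp
  ultimately have "log 2 (log 2 x) \<le> log 2 (2 ^ s)"
    by (subst log_le_cancel_iff) auto
  then show ?thesis
    by (simp add: log_nat_power)
qed

theorem theorem7:
  fixes n t :: nat and H :: "nat \<Rightarrow> ((nat \<times> nat) \<times> (nat \<times> nat)) set"
  assumes "n \<ge> 2"
    and "\<And>k. k < t \<Longrightarrow> comparability_graph (H k) \<and> H k \<subseteq> Gn_edges n"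
    and "(\<Union>k<t. H k) = Gn_edges n"
  shows "real t \<ge> 1/2 * log 2 (log 2 (real n))"
proof -
  obtain Q :: "nat \<times> bool \<Rightarrow> ((nat \<times> nat) \<times> (nat \<times> nat)) set"
    where "\<And>q. q \<in> {..<t} \<times> UNIV \<Longrightarrow> trans (Q q)"
      and "\<And>q. q \<in> {..<t} \<times> UNIV \<Longrightarrow> Q q \<subseteq> Gn_edges n"
      and "Gn_edges n \<subseteq> (\<Union>q\<in>{..<t} \<times> UNIV. Q q)"
    using transitive_cover_if_comparability_cover[OF sym_Gn_edges assms(2) equalityD2[OF assms(3)]]
    by blast
  then have "n \<le> 2 ^ 2 ^ card ({..<t} \<times> (UNIV :: bool set))"
    by (intro card_le_exp_exp_if_transitive_cover) auto
  then have "real n \<le> 2 ^ 2 ^ (2 * t)"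
    by (simp add: card_cartesian_product mult.commute flip: of_nat_le_iff)
  with assms(1) show ?thesis
    using log_log_le_if_le_exp_exp[of "real n" "2 * t"] by simp
qed

end
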